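(* Let $\mathbf{Q}=(Q,Z,\cdot)$ be a finite automaton, $q\in Q$, $u\in Z^*$, and $\mathcal{C}$ a Conway category. If the identity $\Gamma(\mathbf{Q},q)$ holds in $\mathcal{C}$, then so does $\Gamma(\mathbf{Q},qu)$. Consequently, if $(\mathbf{Q},q)$ is initially connected, then $\Gamma(\mathbf{Q})$ holds in $\mathcal{C}$ if and only if $\Gamma(\mathbf{Q},q)$ holds in $\mathcal{C}$.
   Context: Cartesian categories have chosen finite products (terminal object $T$, projections $\pi_i$, tupling $\langle\cdot\rangle$, $!_A:A\to T$, $f\times g$), strictly associative; composition is written $g\circ f$; $\Delta_{A^n}=\langle 1_A,\ldots,1_A\rangle:A\to A^n$. A dagger operation maps $f:A\times C\to A$ to $f^\dagger:C\to A$. A Conway category is a cartesian category with dagger satisfying: $(f\circ(1_A\times g))^\dagger=f^\dagger\circ g$ ($f:A\times B\to A$, $g:C\to B$); $f^{\dagger\dagger}=(f\circ(\Delta_{A^2}\times 1_C))^\dagger$ ($f:A\times A\times C\to A$); $(f\circ\langle g,\pi_2^{A\times C}\rangle)^\dagger=f\circ\langle (g\circ\langle f,\pi_2^{B\times C}\rangle)^\dagger,1_C\rangle$ ($f:B\times C\to A$, $g:A\times C\to B$). A finite automaton $\mathbf{Q}=(Q,Z,\cdot)$ has finite nonempty state set $Q$, finite nonempty input alphabet $Z$ and action $Q\times Z\to Q$, extended to words $u\in Z^*$, written $qu$. Write $Q=\{q_1,\ldots,q_n\}$, identified with $\{1,\ldots,n\}$, and $Z=\{a_1,\ldots,a_m\}$.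 For an object $A$ and $i\in[n]$ let $\rho_i^{\mathbf{Q},A}=\langle\pi^{A^n}_{ia_1},\ldots,\pi^{A^n}_{ia_m}\rangle:A^n\to A^m$ ($ia_j$ is the index of $q_i\cdot a_j$). For $f:A^m\times C\to A$ let $f^{\mathbf{Q},A}:A^n\times C\to A^n$ have components $\pi_i^{A^n}\circ f^{\mathbf{Q},A}=f\circ(\rho_i^{\mathbf{Q},A}\times 1_C)$. The identity $\Gamma(\mathbf{Q})$ holds in $\mathcal{C}$ if $(f^{\mathbf{Q},A})^\dagger=\Delta_{A^n}\circ(f\circ(\Delta_{A^m}\times 1_C))^\dagger$ for all objects $A,C$ and all $f:A^m\times C\to A$; for a state $q_i$, $\Gamma(\mathbf{Q},q_i)$ holds if $\pi_i^{A^n}\circ(f^{\mathbf{Q},A})^\dagger=(f\circ(\Delta_{A^m}\times 1_C))^\dagger$ for all such $A,C,f$. $(\mathbf{Q},q)$ is initially connected if every state of $\mathbf{Q}$ equals $qu$ for some word $u\in Z^*$. *)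

theory Defs
  imports Main
begin

text \<open>Objects are the elements of type 'o, arrows the elements of
type 'm; every arrow f has a domain dm f and codomain cd f.
cmp X g f is the composite g o f (meaningful when cd f = dm g).
prd X A B is the chosen product A x B with projections pr1 X A B, pr2 X A B;
pair X f g is the tupling of f and g.  dag X A C f is the dagger of
f : A x C -> A.\<close>

record ('o, 'm) cstruct =
  dm   :: "'m \<Rightarrow> 'o"
  cd   :: "'m \<Rightarrow> 'o"
  cmp  :: "'m \<Rightarrow> 'm \<Rightarrow> 'm"
  idm  :: "'o \<Rightarrow> 'm"
  trm  :: "'o"
  bang :: "'o \<Rightarrow> 'm"
  prd  :: "'o \<Rightarrow> 'o \<Rightarrow> 'o"
  pr1  :: "'o \<Rightarrow> 'o \<Rightarrow> 'm"
  pr2  :: "'o \<Rightarrow> 'o \<Rightarrow> 'm"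
  pair :: "'m \<Rightarrow> 'm \<Rightarrow> 'm"
  dag  :: "'o \<Rightarrow> 'o \<Rightarrow> 'm \<Rightarrow> 'm"

definition hom :: "('o, 'm) cstruct \<Rightarrow> 'o \<Rightarrow> 'o \<Rightarrow> 'm set" where
  "hom X A B = {f. dm X f = A \<and> cd X f = B}"

text \<open>Cartesian category with chosen finite products (terminal object plus binary
products), strictly associative: (A x B) x C = A x (B x C) and the canonical
associativity morphism is the identity.\<close>
definition cartesian :: "('o, 'm) cstruct \<Rightarrow> bool" where
  "cartesian X \<longleftrightarrow>
    (\<forall>f g. cd X f = dm X g \<longrightarrow> dm X (cmp X g f) = dm X f \<and> cd X (cmp X g f) = cd X g) \<and>
    (\<forall>f g h. cd X f = dm X g \<longrightarrow> cd X g = dm X h \<longrightarrow>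
        cmp X h (cmp X g f) = cmp X (cmp X h g) f) \<and>
    (\<forall>A. idm X A \<in> hom X A A) \<and>
    (\<forall>f. cmp X (idm X (cd X f)) f = f \<and> cmp X f (idm X (dm X f)) = f) \<and>
    (\<forall>A. bang X A \<in> hom X A (trm X)) \<and>
    (\<forall>A f. f \<in> hom X A (trm X) \<longrightarrow> f = bang X A) \<and>
    (\<forall>A B. pr1 X A B \<in> hom X (prd X A B) A \<and> pr2 X A B \<in> hom X (prd X A B) B) \<and>
    (\<forall>D A B f g. f \<in> hom X D A \<longrightarrow> g \<in> hom X D B \<longrightarrow>
        pair X f g \<in> hom X D (prd X A B) \<and>
        cmp X (pr1 X A B) (pair X f g) = f \<and> cmp X (pr2 X A B) (pair X f g) = g) \<and>
    (\<forall>D A B h. h \<in> hom X D (prd X A B) \<longrightarrow>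
        pair X (cmp X (pr1 X A B) h) (cmp X (pr2 X A B) h) = h) \<and>
    (\<forall>A B C. prd X (prd X A B) C = prd X A (prd X B C) \<and>
        pair X (cmp X (pr1 X A B) (pr1 X (prd X A B) C))
               (pair X (cmp X (pr2 X A B) (pr1 X (prd X A B) C)) (pr2 X (prd X A B) C))
          = idm X (prd X (prd X A B) C))"

fun pw :: "('o, 'm) cstruct \<Rightarrow> 'o \<Rightarrow> nat \<Rightarrow> 'o" where
  "pw X A 0 = trm X"
| "pw X A (Suc 0) = A"
| "pw X A (Suc (Suc n)) = prd X A (pw X A (Suc n))"

text \<open>Projections pi_i of A^n, for 1 \<le> i \<le> n.\<close>
fun prj :: "('o, 'm) cstruct \<Rightarrow> 'o \<Rightarrow> nat \<Rightarrow> nat \<Rightarrow> 'm" where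
  "prj X A 0 i = undefined"
| "prj X A (Suc 0) i = idm X A"
| "prj X A (Suc (Suc n)) i =
     (if i \<le> 1 then pr1 X A (pw X A (Suc n))
      else cmp X (prj X A (Suc n) (i - 1)) (pr2 X A (pw X A (Suc n))))"

fun tup :: "('o, 'm) cstruct \<Rightarrow> 'o \<Rightarrow> 'm list \<Rightarrow> 'm" where
  "tup X D [] = bang X D"
| "tup X D [f] = f"
| "tup X D (f # g # fs) = pair X f (tup X D (g # fs))"

definition diag :: "('o, 'm) cstruct \<Rightarrow> 'o \<Rightarrow> nat \<Rightarrow> 'm" where
  "diag X A n = tup X A (replicate n (idm X A))"

definition cross :: "('o, 'm) cstruct \<Rightarrow> 'm \<Rightarrow> 'm \<Rightarrow> 'm" where
  "cross X f g = pair X (cmp X f (pr1 X (dm X f) (dm X g))) (cmp X g (pr2 X (dm X f) (dm X g)))"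

definition conway :: "('o, 'm) cstruct \<Rightarrow> bool" where
  "conway X \<longleftrightarrow> cartesian X \<and>
    (\<forall>A C f. f \<in> hom X (prd X A C) A \<longrightarrow> dag X A C f \<in> hom X C A) \<and>
    (\<forall>A B C f g. f \<in> hom X (prd X A B) A \<longrightarrow> g \<in> hom X C B \<longrightarrow>
        dag X A C (cmp X f (cross X (idm X A) g)) = cmp X (dag X A B f) g) \<and>
    (\<forall>A C f. f \<in> hom X (prd X A (prd X A C)) A \<longrightarrow>
        dag X A C (dag X A (prd X A C) f) = dag X A C (cmp X f (cross X (diag X A 2) (idm X C)))) \<and>
    (\<forall>A B C f g. f \<in> hom X (prd X B C) A \<longrightarrow> g \<in> hom X (prd X A C) B \<longrightarrow>
        dag X A C (cmp X f (pair X g (pr2 X A C))) =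
        cmp X f (pair X (dag X B C (cmp X g (pair X f (pr2 X B C)))) (idm X C)))"

definition automaton :: "nat \<Rightarrow> nat \<Rightarrow> (nat \<Rightarrow> nat \<Rightarrow> nat) \<Rightarrow> bool" where
  "automaton n m \<delta> \<longleftrightarrow> 1 \<le> n \<and> 1 \<le> m \<and> (\<forall>i\<in>{1..n}. \<forall>j\<in>{1..m}. \<delta> i j \<in> {1..n})"

definition run :: "(nat \<Rightarrow> nat \<Rightarrow> nat) \<Rightarrow> nat \<Rightarrow> nat list \<Rightarrow> nat" where
  "run \<delta> q u = foldl \<delta> q u"

definition initially_connected :: "nat \<Rightarrow> nat \<Rightarrow> (nat \<Rightarrow> nat \<Rightarrow> nat) \<Rightarrow> nat \<Rightarrow> bool" where
  "initially_connected n m \<delta> q \<longleftrightarrow> (\<forall>p\<in>{1..n}. \<exists>u\<in>lists {1..m}. run \<delta> q u = p)"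

definition rho :: "('o, 'm) cstruct \<Rightarrow> nat \<Rightarrow> nat \<Rightarrow> (nat \<Rightarrow> nat \<Rightarrow> nat) \<Rightarrow> 'o \<Rightarrow> nat \<Rightarrow> 'm" where
  "rho X n m \<delta> A i = tup X (pw X A n) (map (\<lambda>j. prj X A n (\<delta> i j)) [1..<m+1])"

definition fQ :: "('o, 'm) cstruct \<Rightarrow> nat \<Rightarrow> nat \<Rightarrow> (nat \<Rightarrow> nat \<Rightarrow> nat) \<Rightarrow> 'o \<Rightarrow> 'o \<Rightarrow> 'm \<Rightarrow> 'm" where
  "fQ X n m \<delta> A C f = tup X (prd X (pw X A n) C)
     (map (\<lambda>i. cmp X f (cross X (rho X n m \<delta> A i) (idm X C))) [1..<n+1])"

definition Gamma :: "('o, 'm) cstruct \<Rightarrow> nat \<Rightarrow> nat \<Rightarrow> (nat \<Rightarrow> nat \<Rightarrow> nat) \<Rightarrow> bool" where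
  "Gamma X n m \<delta> \<longleftrightarrow> (\<forall>A C f. f \<in> hom X (prd X (pw X A m) C) A \<longrightarrow>
     dag X (pw X A n) C (fQ X n m \<delta> A C f) =
     cmp X (diag X A n) (dag X A C (cmp X f (cross X (diag X A m) (idm X C)))))"

definition Gamma_at :: "('o, 'm) cstruct \<Rightarrow> nat \<Rightarrow> nat \<Rightarrow> (nat \<Rightarrow> nat \<Rightarrow> nat) \<Rightarrow> nat \<Rightarrow> bool" where
  "Gamma_at X n m \<delta> i \<longleftrightarrow> (\<forall>A C f. f \<in> hom X (prd X (pw X A m) C) A \<longrightarrow>
     cmp X (prj X A n i) (dag X (pw X A n) C (fQ X n m \<delta> A C f)) =
     dag X A C (cmp X f (cross X (diag X A m) (idm X C))))"

end

theory Submission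
  imports Defs
begin

text \<open>Write \<open>x = (f\<^sup>Q)\<^sup>\<dagger>\<close>, \<open>x\<^sub>p\<close> for its component at state \<open>p\<close>, and
\<open>s = (f \<circ> (\<Delta> \<times> 1))\<^sup>\<dagger>\<close>. To pass from \<open>\<Gamma>(Q, q)\<close> to \<open>\<Gamma>(Q, q a)\<close>, apply \<open>\<Gamma>(Q, q)\<close> at the
object \<open>A \<times> A\<close> to the function that computes \<open>f\<close> on first components and also returns the
first component of its \<open>a\<close>-th argument. Two uses of the composition identity show that the
\<open>q\<close>-component of its \<open>Q\<close>-fixed point is \<open>(x\<^sub>q, x\<^sub>q\<^sub>a)\<close> and that the other side of the
identity is \<open>(s, s)\<close>; comparing second components gives \<open>x\<^sub>q\<^sub>a = s\<close>. Since \<open>\<Gamma>(Q)\<close> says that every component of \<open>x\<close> equals \<open>s\<close>, it is the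
conjunction of all \<open>\<Gamma>(Q, p)\<close>, and in an initially connected automaton every \<open>p\<close> is some
\<open>q u\<close>.\<close>

definition pr1_pow :: "('o, 'm) cstruct \<Rightarrow> 'o \<Rightarrow> nat \<Rightarrow> 'm" where
  "pr1_pow X A k =
    tup X (pw X (prd X A A) k) (map (\<lambda>i. cmp X (pr1 X A A) (prj X (prd X A A) k i)) [1..<k+1])"

text \<open>\<open>track X m j A C f\<close> maps \<open>((a\<^sub>1, b\<^sub>1), \<dots>, (a\<^sub>m, b\<^sub>m), c)\<close> to \<open>(f (a\<^sub>1, \<dots>, a\<^sub>m, c), a\<^sub>j)\<close>.\<close>
definition track :: "('o, 'm) cstruct \<Rightarrow> nat \<Rightarrow> nat \<Rightarrow> 'o \<Rightarrow> 'o \<Rightarrow> 'm \<Rightarrow> 'm" where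
  "track X m j A C f =
    pair X (cmp X f (cross X (pr1_pow X A m) (idm X C)))
      (cmp X (prj X A m j) (cmp X (pr1_pow X A m) (pr1 X (pw X (prd X A A) m) C)))"

locale conway_category =
  fixes X :: "('o, 'm) cstruct"
  assumes conway: "conway X"
begin

lemma cartesian: "cartesian X"
  using conway by (simp add: conway_def)

lemmas cartesian_laws = cartesian[unfolded cartesian_def hom_def mem_Collect_eq]

lemma dm_cmp [simp]: "cd X f = dm X g \<Longrightarrow> dm X (cmp X g f) = dm X f"
  and cd_cmp [simp]: "cd X f = dm X g \<Longrightarrow> cd X (cmp X g f) = cd X g"
  using cartesian_laws by simp_all

lemma cmp_assoc [simp]:
  "cd X f = dm X g \<Longrightarrow> cd X g = dm X h \<Longrightarrow> cmp X (cmp X h g) f = cmp X h (cmp X g f)"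
  using cartesian_laws by simp

lemma cmp_assoc_rewrite:
  "cmp X g f = e \<Longrightarrow> cd X f = dm X g \<Longrightarrow> cd X k = dm X f \<Longrightarrow> cmp X g (cmp X f k) = cmp X e k"
  by (metis cmp_assoc)

lemma dm_idm [simp]: "dm X (idm X A) = A"
  and cd_idm [simp]: "cd X (idm X A) = A"
  and cmp_idm_left [simp]: "cd X f = B \<Longrightarrow> cmp X (idm X B) f = f"
  and cmp_idm_right [simp]: "dm X f = A \<Longrightarrow> cmp X f (idm X A) = f"
  using cartesian_laws by auto

lemma dm_bang [simp]: "dm X (bang X A) = A"
  and cd_bang [simp]: "cd X (bang X A) = trm X"
  and bang_unique: "dm X f = A \<Longrightarrow> cd X f = trm X \<Longrightarrow> f = bang X A"
  using cartesian_laws by auto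

lemma dm_pr1 [simp]: "dm X (pr1 X A B) = prd X A B"
  and cd_pr1 [simp]: "cd X (pr1 X A B) = A"
  and dm_pr2 [simp]: "dm X (pr2 X A B) = prd X A B"
  and cd_pr2 [simp]: "cd X (pr2 X A B) = B"
  using cartesian_laws by simp_all

lemma dm_pair [simp]: "dm X f = dm X g \<Longrightarrow> dm X (pair X f g) = dm X f"
  and cd_pair [simp]: "dm X f = dm X g \<Longrightarrow> cd X (pair X f g) = prd X (cd X f) (cd X g)"
  and pr1_pair [simp]: "dm X f = dm X g \<Longrightarrow> cd X f = A \<Longrightarrow> cd X g = B \<Longrightarrow> cmp X (pr1 X A B) (pair X f g) = f"
  and pr2_pair [simp]: "dm X f = dm X g \<Longrightarrow> cd X f = A \<Longrightarrow> cd X g = B \<Longrightarrow> cmp X (pr2 X A B) (pair X f g) = g"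
  using cartesian_laws by auto

lemma pair_eta: "cd X h = prd X A B \<Longrightarrow> pair X (cmp X (pr1 X A B) h) (cmp X (pr2 X A B) h) = h"
  using cartesian_laws by simp

lemma pair_eqI:
  assumes "cd X h = prd X A B" and "cd X k = prd X A B"
    and "cmp X (pr1 X A B) h = cmp X (pr1 X A B) k" and "cmp X (pr2 X A B) h = cmp X (pr2 X A B) k"
  shows "h = k"
  by (metis assms pair_eta)

lemma cmp_pair [simp]:
  "dm X f = dm X g \<Longrightarrow> cd X k = dm X f \<Longrightarrow> cmp X (pair X f g) k = pair X (cmp X f k) (cmp X g k)"
  by (rule pair_eqI[where A = "cd X f" and B = "cd X g"]) (simp_all flip: cmp_assoc)

lemma dm_cross [simp]: "dm X (cross X f g) = prd X (dm X f) (dm X g)"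
  and cd_cross [simp]: "cd X (cross X f g) = prd X (cd X f) (cd X g)"
  by (simp_all add: cross_def)

lemma cross_cmp_pair [simp]:
  "dm X a = dm X b \<Longrightarrow> cd X a = dm X f \<Longrightarrow> cd X b = dm X g \<Longrightarrow>
    cmp X (cross X f g) (pair X a b) = pair X (cmp X f a) (cmp X g b)"
  by (simp add: cross_def)

lemma dm_dag [simp]: "dm X f = prd X A C \<Longrightarrow> cd X f = A \<Longrightarrow> dm X (dag X A C f) = C"
  and cd_dag [simp]: "dm X f = prd X A C \<Longrightarrow> cd X f = A \<Longrightarrow> cd X (dag X A C f) = A"
  using conway unfolding conway_def hom_def by blast+

lemma dag_composition:
  "dm X f = prd X B C \<Longrightarrow> cd X f = A \<Longrightarrow> dm X g = prd X A C \<Longrightarrow> cd X g = B \<Longrightarrow>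
    dag X A C (cmp X f (pair X g (pr2 X A C))) =
    cmp X f (pair X (dag X B C (cmp X g (pair X f (pr2 X B C)))) (idm X C))"
  using conway unfolding conway_def hom_def by blast

lemma dag_fixed_point:
  assumes f: "dm X f = prd X A C" "cd X f = A"
  shows "dag X A C f = cmp X f (pair X (dag X A C f) (idm X C))"
proof -
  have "pair X (pr1 X A C) (pr2 X A C) = idm X (prd X A C)"
    using pair_eta[of "idm X (prd X A C)" A C] by simp
  moreover have "dag X A C (cmp X f (pair X (pr1 X A C) (pr2 X A C))) =
      cmp X f (pair X (dag X A C (cmp X (pr1 X A C) (pair X f (pr2 X A C)))) (idm X C))"
    using dag_composition[of f A C A "pr1 X A C"] f by simp
  ultimately show ?thesis
    using f by simp
qed

lemma prj_in_hom: "1 \<le> i \<Longrightarrow> i \<le> n \<Longrightarrow> prj X A n i \<in> hom X (pw X A n) A"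
  unfolding hom_def by (induction n arbitrary: i rule: induct_nat_012) auto

lemma dm_prj [simp]: "1 \<le> i \<Longrightarrow> i \<le> n \<Longrightarrow> dm X (prj X A n i) = pw X A n"
  and cd_prj [simp]: "1 \<le> i \<Longrightarrow> i \<le> n \<Longrightarrow> cd X (prj X A n i) = A"
  using prj_in_hom by (simp_all add: hom_def)

lemma dm_tup [simp]: "\<forall>f\<in>set fs. dm X f = D \<Longrightarrow> dm X (tup X D fs) = D"
  by (induction fs rule: induct_list012) auto

lemma cd_tup:
  "\<forall>f\<in>set fs. dm X f = D \<and> cd X f = A \<Longrightarrow> cd X (tup X D fs) = pw X A (length fs)"
  by (induction fs rule: induct_list012) auto

lemma prj_tup:
  "\<forall>f\<in>set fs. dm X f = D \<and> cd X f = A \<Longrightarrow> 1 \<le> i \<Longrightarrow> i \<le> length fs \<Longrightarrow>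
    cmp X (prj X A (length fs) i) (tup X D fs) = fs ! (i - 1)"
proof (induction fs arbitrary: i rule: induct_list012)
  case (3 f g fs)
  let ?t = "tup X D (g # fs)"
  have t: "dm X ?t = D" "cd X ?t = pw X A (Suc (length fs))"
    using "3.prems"(1) cd_tup[of "g # fs" D A] by (simp_all del: tup.simps)
  show ?case
  proof (cases "i = 1")
    case True
    then show ?thesis
      using "3.prems" t by simp
  next
    case False
    then have "cmp X (prj X A (length (f # g # fs)) i) (tup X D (f # g # fs)) =
        cmp X (prj X A (Suc (length fs)) (i - 1)) ?t"
      using "3.prems" t by simp
    also have "\<dots> = (g # fs) ! (i - 1 - 1)"
      using "3.IH"(2)[of "i - 1"] "3.prems" False by simp
    finally show ?thesis
      using False "3.prems"(2) by (cases i) auto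
  qed
qed auto

lemma
  assumes "\<And>i. 1 \<le> i \<Longrightarrow> i \<le> k \<Longrightarrow> dm X (g i) = D \<and> cd X (g i) = A"
  shows dm_tup_map: "dm X (tup X D (map g [1..<k+1])) = D"
    and cd_tup_map: "cd X (tup X D (map g [1..<k+1])) = pw X A k"
    and prj_tup_map: "1 \<le> l \<Longrightarrow> l \<le> k \<Longrightarrow> cmp X (prj X A k l) (tup X D (map g [1..<k+1])) = g l"
proof -
  have g: "\<forall>f\<in>set (map g [1..<k+1]). dm X f = D \<and> cd X f = A"
    using assms by auto
  show "dm X (tup X D (map g [1..<k+1])) = D"
    using g by simp
  show "cd X (tup X D (map g [1..<k+1])) = pw X A k"
    using cd_tup[OF g] by (simp del: upt_Suc)
  show "cmp X (prj X A k l) (tup X D (map g [1..<k+1])) = g l" if "1 \<le> l" "l \<le> k"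
    using prj_tup[OF g, of l] that by (simp add: nth_map del: upt_Suc)
qed

lemma pw_eqI:
  assumes "dm X h = dm X k" "cd X h = pw X A n" "cd X k = pw X A n"
    and "\<And>i. 1 \<le> i \<Longrightarrow> i \<le> n \<Longrightarrow> cmp X (prj X A n i) h = cmp X (prj X A n i) k"
  shows "h = k"
  using assms
proof (induction n arbitrary: h k rule: induct_nat_012)
  case 0
  then show ?case
    by (metis bang_unique pw.simps(1))
next
  case 1
  then show ?case
    using "1.prems"(4)[of 1] by simp
next
  case (ge2 n)
  let ?B = "pw X A (Suc n)"
  have "cmp X (pr2 X A ?B) h = cmp X (pr2 X A ?B) k"
  proof (rule ge2.IH(2))
    fix i
    assume "1 \<le> i" "i \<le> Suc n"
    then show "cmp X (prj X A (Suc n) i) (cmp X (pr2 X A ?B) h) =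
        cmp X (prj X A (Suc n) i) (cmp X (pr2 X A ?B) k)"
      using ge2.prems(4)[of "Suc i"] ge2.prems(1-3) by simp
  qed (use ge2.prems in simp_all)
  moreover have "cmp X (pr1 X A ?B) h = cmp X (pr1 X A ?B) k"
    using ge2.prems(4)[of 1] by simp
  ultimately show ?case
    using ge2.prems(2,3) by (intro pair_eqI[of h A ?B k]) simp_all
qed

lemma diag_tup_map: "diag X A k = tup X A (map (\<lambda>_. idm X A) [1..<k+1])"
  by (simp add: diag_def map_replicate_const del: upt_Suc)

lemma dm_diag [simp]: "dm X (diag X A k) = A"
  and cd_diag [simp]: "cd X (diag X A k) = pw X A k"
  and prj_diag [simp]: "1 \<le> l \<Longrightarrow> l \<le> k \<Longrightarrow> cmp X (prj X A k l) (diag X A k) = idm X A"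
  using dm_tup_map[of k "\<lambda>_. idm X A" A A] cd_tup_map[of k "\<lambda>_. idm X A" A A]
    prj_tup_map[of k "\<lambda>_. idm X A" A A]
  unfolding diag_tup_map by simp_all

lemma prj_diag_cmp [simp]:
  "1 \<le> l \<Longrightarrow> l \<le> k \<Longrightarrow> cd X r = A \<Longrightarrow> cmp X (prj X A k l) (cmp X (diag X A k) r) = r"
  by (subst cmp_assoc_rewrite[OF prj_diag]) auto

lemma dm_pr1_pow [simp]: "dm X (pr1_pow X A k) = pw X (prd X A A) k"
  and cd_pr1_pow [simp]: "cd X (pr1_pow X A k) = pw X A k"
  and prj_pr1_pow [simp]:
    "1 \<le> l \<Longrightarrow> l \<le> k \<Longrightarrow> cmp X (prj X A k l) (pr1_pow X A k) = cmp X (pr1 X A A) (prj X (prd X A A) k l)"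
proof -
  have "\<And>i. 1 \<le> i \<Longrightarrow> i \<le> k \<Longrightarrow> dm X (cmp X (pr1 X A A) (prj X (prd X A A) k i)) = pw X (prd X A A) k \<and>
      cd X (cmp X (pr1 X A A) (prj X (prd X A A) k i)) = A"
    by simp
  note tup_map = dm_tup_map[OF this] cd_tup_map[OF this] prj_tup_map[OF this]
  show "dm X (pr1_pow X A k) = pw X (prd X A A) k" "cd X (pr1_pow X A k) = pw X A k"
    "1 \<le> l \<Longrightarrow> l \<le> k \<Longrightarrow> cmp X (prj X A k l) (pr1_pow X A k) = cmp X (pr1 X A A) (prj X (prd X A A) k l)"
    unfolding pr1_pow_def using tup_map by simp_all
qed

lemma prj_pr1_pow_cmp [simp]:
  "1 \<le> l \<Longrightarrow> l \<le> k \<Longrightarrow> cd X r = pw X (prd X A A) k \<Longrightarrow>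
    cmp X (prj X A k l) (cmp X (pr1_pow X A k) r) = cmp X (pr1 X A A) (cmp X (prj X (prd X A A) k l) r)"
  by (subst cmp_assoc_rewrite[OF prj_pr1_pow]) auto

lemma pr1_pow_diag [simp]:
  "cd X r = prd X A A \<Longrightarrow>
    cmp X (pr1_pow X A k) (cmp X (diag X (prd X A A) k) r) = cmp X (diag X A k) (cmp X (pr1 X A A) r)"
  by (rule pw_eqI[where A = A and n = k]) simp_all

lemma dm_track [simp]: "dm X f = prd X (pw X A m) C \<Longrightarrow> 1 \<le> j \<Longrightarrow> j \<le> m \<Longrightarrow>
    dm X (track X m j A C f) = prd X (pw X (prd X A A) m) C"
  and cd_track [simp]: "dm X f = prd X (pw X A m) C \<Longrightarrow> cd X f = A \<Longrightarrow> 1 \<le> j \<Longrightarrow> j \<le> m \<Longrightarrow>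
    cd X (track X m j A C f) = prd X A A"
  by (simp_all add: track_def cross_def)

lemma dag_track_diag:
  assumes f: "dm X f = prd X (pw X A m) C" "cd X f = A" and j: "1 \<le> j" "j \<le> m"
  defines "s \<equiv> dag X A C (cmp X f (cross X (diag X A m) (idm X C)))"
  shows "dag X (prd X A A) C (cmp X (track X m j A C f) (cross X (diag X (prd X A A) m) (idm X C))) =
    pair X s s"
proof -
  define f1 where "f1 = cmp X f (cross X (diag X A m) (idm X C))"
  define g where "g = cmp X (pr1 X A A) (pr1 X (prd X A A) C)"
  have f1: "dm X f1 = prd X A C" "cd X f1 = A"
    unfolding f1_def using f by simp_all
  have "cmp X (track X m j A C f) (cross X (diag X (prd X A A) m) (idm X C)) =
      cmp X (pair X f1 (pr1 X A C)) (pair X g (pr2 X (prd X A A) C))"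
    by (rule pair_eqI[where A = A and B = A])
      (use f j in \<open>simp_all add: track_def f1_def g_def cross_def\<close>)
  moreover have "cmp X g (pair X (pair X f1 (pr1 X A C)) (pr2 X A C)) = f1"
    unfolding g_def using f1 by simp
  ultimately have "dag X (prd X A A) C (cmp X (track X m j A C f) (cross X (diag X (prd X A A) m) (idm X C))) =
      cmp X (pair X f1 (pr1 X A C)) (pair X s (idm X C))"
    using dag_composition[of "pair X f1 (pr1 X A C)" A C "prd X A A" g] f1
    by (simp add: g_def s_def f1_def)
  also have "\<dots> = pair X s s"
    using f1 dag_fixed_point[OF f1] by (simp add: s_def f1_def)
  finally show ?thesis .
qed

context
  fixes n m :: nat and \<delta> :: "nat \<Rightarrow> nat \<Rightarrow> nat"
  assumes automaton: "automaton n m \<delta>"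
begin

lemma transition_in_states: "1 \<le> i \<Longrightarrow> i \<le> n \<Longrightarrow> 1 \<le> j \<Longrightarrow> j \<le> m \<Longrightarrow> 1 \<le> \<delta> i j \<and> \<delta> i j \<le> n"
  using automaton unfolding automaton_def by auto

lemma
  assumes "1 \<le> i" "i \<le> n"
  shows dm_rho [simp]: "dm X (rho X n m \<delta> A i) = pw X A n"
    and cd_rho [simp]: "cd X (rho X n m \<delta> A i) = pw X A m"
    and prj_rho [simp]: "1 \<le> l \<Longrightarrow> l \<le> m \<Longrightarrow> cmp X (prj X A m l) (rho X n m \<delta> A i) = prj X A n (\<delta> i l)"
proof -
  have "\<And>j. 1 \<le> j \<Longrightarrow> j \<le> m \<Longrightarrow> dm X (prj X A n (\<delta> i j)) = pw X A n \<and> cd X (prj X A n (\<delta> i j)) = A"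
    using assms transition_in_states by simp
  note tup_map = dm_tup_map[OF this] cd_tup_map[OF this] prj_tup_map[OF this]
  show "dm X (rho X n m \<delta> A i) = pw X A n" "cd X (rho X n m \<delta> A i) = pw X A m"
    "1 \<le> l \<Longrightarrow> l \<le> m \<Longrightarrow> cmp X (prj X A m l) (rho X n m \<delta> A i) = prj X A n (\<delta> i l)"
    unfolding rho_def using tup_map by simp_all
qed

lemma prj_rho_cmp [simp]:
  "1 \<le> i \<Longrightarrow> i \<le> n \<Longrightarrow> 1 \<le> l \<Longrightarrow> l \<le> m \<Longrightarrow> cd X r = pw X A n \<Longrightarrow>
    cmp X (prj X A m l) (cmp X (rho X n m \<delta> A i) r) = cmp X (prj X A n (\<delta> i l)) r"
  by (rule cmp_assoc_rewrite) auto

lemma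
  assumes "dm X f = prd X (pw X A m) C" "cd X f = A"
  shows dm_fQ [simp]: "dm X (fQ X n m \<delta> A C f) = prd X (pw X A n) C"
    and cd_fQ [simp]: "cd X (fQ X n m \<delta> A C f) = pw X A n"
    and prj_fQ [simp]: "1 \<le> i \<Longrightarrow> i \<le> n \<Longrightarrow>
      cmp X (prj X A n i) (fQ X n m \<delta> A C f) = cmp X f (cross X (rho X n m \<delta> A i) (idm X C))"
proof -
  have "\<And>i. 1 \<le> i \<Longrightarrow> i \<le> n \<Longrightarrow> dm X (cmp X f (cross X (rho X n m \<delta> A i) (idm X C))) = prd X (pw X A n) C \<and>
      cd X (cmp X f (cross X (rho X n m \<delta> A i) (idm X C))) = A"
    using assms by simp
  note tup_map = dm_tup_map[OF this] cd_tup_map[OF this] prj_tup_map[OF this]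
  show "dm X (fQ X n m \<delta> A C f) = prd X (pw X A n) C" "cd X (fQ X n m \<delta> A C f) = pw X A n"
    "1 \<le> i \<Longrightarrow> i \<le> n \<Longrightarrow>
      cmp X (prj X A n i) (fQ X n m \<delta> A C f) = cmp X f (cross X (rho X n m \<delta> A i) (idm X C))"
    unfolding fQ_def using tup_map by simp_all
qed

lemma prj_dag_fQ:
  assumes f: "dm X f = prd X (pw X A m) C" "cd X f = A" and i: "1 \<le> i" "i \<le> n"
  defines "x \<equiv> dag X (pw X A n) C (fQ X n m \<delta> A C f)"
  shows "cmp X (prj X A n i) x = cmp X f (pair X (cmp X (rho X n m \<delta> A i) x) (idm X C))"
proof -
  have "cmp X (prj X A n i) x = cmp X (prj X A n i) (cmp X (fQ X n m \<delta> A C f) (pair X x (idm X C)))"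
    using dag_fixed_point[of "fQ X n m \<delta> A C f"] f by (simp add: x_def)
  also have "\<dots> = cmp X f (cmp X (cross X (rho X n m \<delta> A i) (idm X C)) (pair X x (idm X C)))"
    using f i by (subst cmp_assoc_rewrite[OF prj_fQ]) (simp_all add: x_def)
  finally show ?thesis
    using f i by (simp add: x_def)
qed

lemma pr1_pow_rho [simp]:
  assumes "1 \<le> i" "i \<le> n" "cd X r = pw X (prd X A A) n"
  shows "cmp X (pr1_pow X A m) (cmp X (rho X n m \<delta> (prd X A A) i) r) =
    cmp X (rho X n m \<delta> A i) (cmp X (pr1_pow X A n) r)"
  by (rule pw_eqI[where A = A and n = m]) (use assms transition_in_states in auto)

lemma fQ_track_factorization:
  assumes f: "dm X f = prd X (pw X A m) C" "cd X f = A" and j: "1 \<le> j" "j \<le> m"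
  defines "F \<equiv> tup X (prd X (pw X A n) C) (map (\<lambda>i. pair X (cmp X f (cross X (rho X n m \<delta> A i) (idm X C)))
      (cmp X (prj X A n (\<delta> i j)) (pr1 X (pw X A n) C))) [1..<n+1])"
    and "g \<equiv> cmp X (pr1_pow X A n) (pr1 X (pw X (prd X A A) n) C)"
  shows "dm X F = prd X (pw X A n) C" and "cd X F = pw X (prd X A A) n"
    and "1 \<le> i \<Longrightarrow> i \<le> n \<Longrightarrow> cmp X (prj X (prd X A A) n i) F =
      pair X (cmp X f (cross X (rho X n m \<delta> A i) (idm X C))) (cmp X (prj X A n (\<delta> i j)) (pr1 X (pw X A n) C))"
    and "fQ X n m \<delta> (prd X A A) C (track X m j A C f) = cmp X F (pair X g (pr2 X (pw X (prd X A A) n) C))"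
    and "cmp X g (pair X F (pr2 X (pw X A n) C)) = fQ X n m \<delta> A C f"
proof -
  have "\<And>i. 1 \<le> i \<Longrightarrow> i \<le> n \<Longrightarrow>
      dm X (pair X (cmp X f (cross X (rho X n m \<delta> A i) (idm X C))) (cmp X (prj X A n (\<delta> i j)) (pr1 X (pw X A n) C)))
        = prd X (pw X A n) C \<and>
      cd X (pair X (cmp X f (cross X (rho X n m \<delta> A i) (idm X C))) (cmp X (prj X A n (\<delta> i j)) (pr1 X (pw X A n) C)))
        = prd X A A"
    using f j transition_in_states by (simp add: cross_def)
  note tup_map = dm_tup_map[OF this] cd_tup_map[OF this] prj_tup_map[OF this]
  show F: "dm X F = prd X (pw X A n) C" "cd X F = pw X (prd X A A) n"
    and prj_F: "\<And>i. 1 \<le> i \<Longrightarrow> i \<le> n \<Longrightarrow> cmp X (prj X (prd X A A) n i) F =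
      pair X (cmp X f (cross X (rho X n m \<delta> A i) (idm X C))) (cmp X (prj X A n (\<delta> i j)) (pr1 X (pw X A n) C))"
    unfolding F_def using tup_map by simp_all
  show "fQ X n m \<delta> (prd X A A) C (track X m j A C f) = cmp X F (pair X g (pr2 X (pw X (prd X A A) n) C))"
  proof (rule pw_eqI[where A = "prd X A A" and n = n])
    fix i
    assume i: "1 \<le> i" "i \<le> n"
    show "cmp X (prj X (prd X A A) n i) (fQ X n m \<delta> (prd X A A) C (track X m j A C f)) =
        cmp X (prj X (prd X A A) n i) (cmp X F (pair X g (pr2 X (pw X (prd X A A) n) C)))"
      using f i j F transition_in_states[OF i j]
      by (subst cmp_assoc_rewrite[OF prj_F]) (simp_all add: track_def cross_def g_def)
  qed (use f j F in \<open>simp_all add: g_def\<close>)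
  show "cmp X g (pair X F (pr2 X (pw X A n) C)) = fQ X n m \<delta> A C f"
  proof (rule pw_eqI[where A = A and n = n])
    fix i
    assume i: "1 \<le> i" "i \<le> n"
    show "cmp X (prj X A n i) (cmp X g (pair X F (pr2 X (pw X A n) C))) = cmp X (prj X A n i) (fQ X n m \<delta> A C f)"
      using f i j F transition_in_states[OF i j]
      by (simp add: g_def prj_F cross_def)
  qed (use f F in \<open>simp_all add: g_def\<close>)
qed

lemma prj_dag_fQ_track:
  assumes f: "dm X f = prd X (pw X A m) C" "cd X f = A" and j: "1 \<le> j" "j \<le> m" and i: "1 \<le> i" "i \<le> n"
  defines "x \<equiv> dag X (pw X A n) C (fQ X n m \<delta> A C f)"
  shows "cmp X (prj X (prd X A A) n i) (dag X (pw X (prd X A A) n) C (fQ X n m \<delta> (prd X A A) C (track X m j A C f))) =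
    pair X (cmp X (prj X A n i) x) (cmp X (prj X A n (\<delta> i j)) x)"
proof -
  obtain F g where F: "dm X F = prd X (pw X A n) C" "cd X F = pw X (prd X A A) n"
    and prj_F: "cmp X (prj X (prd X A A) n i) F =
      pair X (cmp X f (cross X (rho X n m \<delta> A i) (idm X C))) (cmp X (prj X A n (\<delta> i j)) (pr1 X (pw X A n) C))"
    and g_def: "g = cmp X (pr1_pow X A n) (pr1 X (pw X (prd X A A) n) C)"
    and factor: "fQ X n m \<delta> (prd X A A) C (track X m j A C f) = cmp X F (pair X g (pr2 X (pw X (prd X A A) n) C))"
    and refold: "cmp X g (pair X F (pr2 X (pw X A n) C)) = fQ X n m \<delta> A C f"
    using fQ_track_factorization[OF f j] i by blast
  have "dag X (pw X (prd X A A) n) C (fQ X n m \<delta> (prd X A A) C (track X m j A C f)) = cmp X F (pair X x (idm X C))"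
    unfolding factor using dag_composition[of F "pw X A n" C "pw X (prd X A A) n" g] F refold
    by (simp add: g_def x_def)
  then show ?thesis
    using f i j F transition_in_states[OF i j] prj_dag_fQ[OF f i]
    by (simp add: cmp_assoc_rewrite[OF prj_F] cross_def x_def)
qed

lemma Gamma_at_transition:
  assumes "Gamma_at X n m \<delta> q" and "1 \<le> q" "q \<le> n" and j: "1 \<le> j" "j \<le> m"
  shows "Gamma_at X n m \<delta> (\<delta> q j)"
  unfolding Gamma_at_def
proof (intro allI impI)
  fix A C f
  assume "f \<in> hom X (prd X (pw X A m) C) A"
  then have f: "dm X f = prd X (pw X A m) C" "cd X f = A"
    by (simp_all add: hom_def)
  define x where "x = dag X (pw X A n) C (fQ X n m \<delta> A C f)"
  define s where "s = dag X A C (cmp X f (cross X (diag X A m) (idm X C)))"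
  have "track X m j A C f \<in> hom X (prd X (pw X (prd X A A) m) C) (prd X A A)"
    using f j by (simp add: hom_def)
  then have "pair X (cmp X (prj X A n q) x) (cmp X (prj X A n (\<delta> q j)) x) = pair X s s"
    using assms(1) prj_dag_fQ_track[OF f j assms(2,3)] dag_track_diag[OF f j]
    unfolding Gamma_at_def x_def s_def by metis
  then have "cmp X (pr2 X A A) (pair X (cmp X (prj X A n q) x) (cmp X (prj X A n (\<delta> q j)) x)) = s"
    using f unfolding s_def by simp
  then show "cmp X (prj X A n (\<delta> q j)) (dag X (pw X A n) C (fQ X n m \<delta> A C f)) = s"
    using f assms(2,3) j transition_in_states[OF assms(2,3) j] by (simp add: x_def)
qed

lemma Gamma_at_run:
  "Gamma_at X n m \<delta> q \<Longrightarrow> q \<in> {1..n} \<Longrightarrow> u \<in> lists {1..m} \<Longrightarrow> Gamma_at X n m \<delta> (run \<delta> q u)"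
proof (induction u arbitrary: q)
  case (Cons a u)
  then have "Gamma_at X n m \<delta> (\<delta> q a)" "\<delta> q a \<in> {1..n}"
    using Gamma_at_transition transition_in_states by auto
  then show ?case
    using Cons.IH Cons.prems(3) by (simp add: run_def)
qed (simp add: run_def)

lemma Gamma_iff_Gamma_at_all: "Gamma X n m \<delta> \<longleftrightarrow> (\<forall>p\<in>{1..n}. Gamma_at X n m \<delta> p)"
  unfolding Gamma_def Gamma_at_def
proof (intro iffI ballI allI impI)
  fix p A C f
  assume "\<forall>A C f. f \<in> hom X (prd X (pw X A m) C) A \<longrightarrow>
      dag X (pw X A n) C (fQ X n m \<delta> A C f) =
      cmp X (diag X A n) (dag X A C (cmp X f (cross X (diag X A m) (idm X C))))"
    and p: "p \<in> {1..n}" and f: "f \<in> hom X (prd X (pw X A m) C) A"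
  then have "dag X (pw X A n) C (fQ X n m \<delta> A C f) =
      cmp X (diag X A n) (dag X A C (cmp X f (cross X (diag X A m) (idm X C))))"
    by blast
  then show "cmp X (prj X A n p) (dag X (pw X A n) C (fQ X n m \<delta> A C f)) =
      dag X A C (cmp X f (cross X (diag X A m) (idm X C)))"
    using p f by (simp add: hom_def)
next
  fix A C f
  assume at: "\<forall>p\<in>{1..n}. \<forall>A C f. f \<in> hom X (prd X (pw X A m) C) A \<longrightarrow>
      cmp X (prj X A n p) (dag X (pw X A n) C (fQ X n m \<delta> A C f)) =
      dag X A C (cmp X f (cross X (diag X A m) (idm X C)))"
    and f: "f \<in> hom X (prd X (pw X A m) C) A"
  show "dag X (pw X A n) C (fQ X n m \<delta> A C f) =
      cmp X (diag X A n) (dag X A C (cmp X f (cross X (diag X A m) (idm X C))))"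
  proof (rule pw_eqI[where A = A and n = n])
    fix i
    assume i: "1 \<le> i" "i \<le> n"
    then have "cmp X (prj X A n i) (dag X (pw X A n) C (fQ X n m \<delta> A C f)) =
        dag X A C (cmp X f (cross X (diag X A m) (idm X C)))"
      using at f by auto
    then show "cmp X (prj X A n i) (dag X (pw X A n) C (fQ X n m \<delta> A C f)) =
        cmp X (prj X A n i) (cmp X (diag X A n) (dag X A C (cmp X f (cross X (diag X A m) (idm X C)))))"
      using i f by (simp add: hom_def)
  qed (use f in \<open>simp_all add: hom_def\<close>)
qed

end

end

theorem corollary4p4:
  fixes X :: "('o, 'm) cstruct" and n m :: nat and \<delta> :: "nat \<Rightarrow> nat \<Rightarrow> nat"
    and q :: nat and u :: "nat list"
  assumes "conway X" and "automaton n m \<delta>" and "q \<in> {1..n}" and "u \<in> lists {1..m}"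
  shows "(Gamma_at X n m \<delta> q \<longrightarrow> Gamma_at X n m \<delta> (run \<delta> q u)) \<and>
         (initially_connected n m \<delta> q \<longrightarrow> (Gamma X n m \<delta> \<longleftrightarrow> Gamma_at X n m \<delta> q))"
proof -
  interpret conway_category X
    by (rule conway_category.intro) (fact assms(1))
  have run: "Gamma_at X n m \<delta> (run \<delta> q v)" if "Gamma_at X n m \<delta> q" "v \<in> lists {1..m}" for v
    using Gamma_at_run[OF assms(2) that(1) assms(3) that(2)] .
  have "Gamma X n m \<delta> \<longleftrightarrow> Gamma_at X n m \<delta> q" if connected: "initially_connected n m \<delta> q"
  proof
    assume "Gamma X n m \<delta>"
    then show "Gamma_at X n m \<delta> q"
      using Gamma_iff_Gamma_at_all[OF assms(2)] assms(3) by simp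
  next
    assume "Gamma_at X n m \<delta> q"
    then have "\<forall>p\<in>{1..n}. Gamma_at X n m \<delta> p"
      using connected run unfolding initially_connected_def by metis
    then show "Gamma X n m \<delta>"
      using Gamma_iff_Gamma_at_all[OF assms(2)] by simp
  qed
  then show ?thesis
    using run assms(4) by simp
qed

end
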